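(* Let $n,k\ge 0$ be integers, and let $W$ be the group of signed permutations of $n+k$ letters acting on $\mathbf{Z}^{n+k}$, with $\rho=(n+k,n+k-1,\dots,2,1)$. Let $\mu$ be a partition with $\mu_1\le k$ and $i_{2n}(\mu)<\infty$, and put $\lambda=\tau_{2n}(\mu)$. Then there exists $w=w_\mu\in W$ such that (i) $w(\rho)_1>w(\rho)_2>\cdots>w(\rho)_k$ and $w(\rho)_{k+1}>\cdots>w(\rho)_{k+n}>0$; (ii) $\ell(w)=|\mu|-i_{2n}(\mu)$; (iii) $w(\rho)-\rho=(-\mu^\dagger_k,\dots,-\mu^\dagger_2,-\mu^\dagger_1,\lambda_1,\lambda_2,\dots,\lambda_n)$.
   Context: $W$ (the Weyl group of type $\mathrm{C}_{n+k}$) is generated by the simple reflections $s_i$ ($1\le i\le n+k-1$) swapping positions $i$ and $i+1$, and $s_{n+k}$ negating the last entry; $\ell(w)$ is the Coxeter length with respect to these generators. Equivalently, $\ell(w)=\mathrm{inv}(w)+\mathrm{neg}(w)+\mathrm{nsp}(w)$, where, writing $a=w(\rho)$, $\mathrm{inv}(w)=\#\{i<j: a_i<a_j\}$, $\mathrm{neg}(w)=\#\{i: a_i<0\}$, $\mathrm{nsp}(w)=\#\{i<j: a_i+a_j<0\}$. For a partition $\mu$, $\mu^\dagger$ is its transpose, $\mu_j^\dagger$ its $j$th part (zero if $j>\ell(\mu^\dagger)$), $|\mu|$ its size, $\ell(\mu)$ its number of nonzero parts. Modification rule: if $\ell(\mu)\le n$, $i_{2n}(\mu)=0$ and $\tau_{2n}(\mu)=\mu$.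 If $\ell(\mu)>n$, let $R_\mu$ be the border strip (connected skew diagram with no $2\times2$ square) of $2(\ell(\mu)-n-1)$ boxes along the rim of $\mu$ starting at the first box of the last row of $\mu$, if it exists. If $R_\mu$ exists, is nonempty, and $\mu\setminus R_\mu$ is a partition, then $i_{2n}(\mu)=c(R_\mu)+i_{2n}(\mu\setminus R_\mu)$ and $\tau_{2n}(\mu)=\tau_{2n}(\mu\setminus R_\mu)$, with $c(R_\mu)$ the number of columns of $R_\mu$; otherwise $i_{2n}(\mu)=\infty$ and $\tau_{2n}(\mu)$ is undefined. *)

theory Defs
  imports Main
begin

definition is_partition :: "nat list \<Rightarrow> bool" where
  "is_partition mu \<longleftrightarrow> sorted_wrt (\<lambda>a b. b \<le> a) mu \<and> 0 \<notin> set mu"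

definition part :: "nat list \<Rightarrow> nat \<Rightarrow> nat" where
  "part mu i = (if 1 \<le> i \<and> i \<le> length mu then mu ! (i - 1) else 0)"

definition conj_part :: "nat list \<Rightarrow> nat \<Rightarrow> nat" where
  "conj_part mu j = card {i. 1 \<le> i \<and> i \<le> length mu \<and> j \<le> part mu i}"

definition diagram :: "nat list \<Rightarrow> (nat \<times> nat) set" where
  "diagram mu = {(i, j). 1 \<le> i \<and> i \<le> length mu \<and> 1 \<le> j \<and> j \<le> part mu i}"

text \<open>Walk along the rim from the first box of the last row towards the
  north-east: move right if possible, otherwise move up.\<close>
definition rim_step :: "nat list \<Rightarrow> nat \<times> nat \<Rightarrow> nat \<times> nat" where
  "rim_step mu b = (case b of (i, j) \<Rightarrow>
     if j + 1 \<le> part mu i then (i, j + 1) else (i - 1, j))"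

definition rim_box :: "nat list \<Rightarrow> nat \<Rightarrow> nat \<times> nat" where
  "rim_box mu t = (rim_step mu ^^ t) (length mu, 1)"

text \<open>The border strip of h boxes along the rim exists iff the first h boxes
  of the walk lie in the diagram.\<close>
definition rim_strip_exists :: "nat list \<Rightarrow> nat \<Rightarrow> bool" where
  "rim_strip_exists mu h \<longleftrightarrow> (\<forall>t<h. rim_box mu t \<in> diagram mu)"

definition rim_strip :: "nat list \<Rightarrow> nat \<Rightarrow> (nat \<times> nat) set" where
  "rim_strip mu h = rim_box mu ` {..<h}"

definition ncols :: "(nat \<times> nat) set \<Rightarrow> nat" where
  "ncols R = card (snd ` R)"

text \<open>The modification rule as a relation: modif n mu i lam holds iff
  i_{2n}(mu) = i (finite) and tau_{2n}(mu) = lam.\<close>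
inductive modif :: "nat \<Rightarrow> nat list \<Rightarrow> nat \<Rightarrow> nat list \<Rightarrow> bool" for n :: nat where
  base: "length mu \<le> n \<Longrightarrow> modif n mu 0 mu"
| step: "\<lbrakk> n < length mu;
           h = 2 * (length mu - n - 1);
           rim_strip_exists mu h;
           rim_strip mu h \<noteq> {};
           is_partition nu;
           diagram nu = diagram mu - rim_strip mu h;
           modif n nu i lam \<rbrakk>
         \<Longrightarrow> modif n mu (ncols (rim_strip mu h) + i) lam"

definition rho :: "nat \<Rightarrow> int list" where
  "rho N = map (\<lambda>i. int (N - i)) [0..<N]"

definition signed_perms :: "nat \<Rightarrow> (int list \<Rightarrow> int list) set" where
  "signed_perms N = {w. \<exists>\<sigma> (\<epsilon> :: nat \<Rightarrow> int).
      bij_betw \<sigma> {..<N} {..<N} \<and> (\<forall>i. \<epsilon> i = 1 \<or> \<epsilon> i = -1) \<and>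
      (\<forall>x. length x = N \<longrightarrow> w x = map (\<lambda>i. \<epsilon> i * x ! \<sigma> i) [0..<N])}"

definition inv_stat :: "int list \<Rightarrow> nat" where
  "inv_stat a = card {(i, j). i < j \<and> j < length a \<and> a ! i < a ! j}"

definition neg_stat :: "int list \<Rightarrow> nat" where
  "neg_stat a = card {i. i < length a \<and> a ! i < 0}"

definition nsp_stat :: "int list \<Rightarrow> nat" where
  "nsp_stat a = card {(i, j). i < j \<and> j < length a \<and> a ! i + a ! j < 0}"

text \<open>Coxeter length of w in type C_N, via the formula inv + neg + nsp of w(rho).\<close>
definition coxeter_length :: "nat \<Rightarrow> (int list \<Rightarrow> int list) \<Rightarrow> nat" where
  "coxeter_length N w = (let a = w (rho N) in inv_stat a + neg_stat a + nsp_stat a)"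

end

theory Submission
  imports Defs
begin

text \<open>Condition (iii) forces a = w(rho) to be a = rho + (-mu'_k, ..., -mu'_1, lam_1, ..., lam_n).
  It remains to show that the absolute values of a are a permutation of 1, ..., n + k, so that
  a signed permutation realises a, and that inv + neg + nsp of a equals |mu| - i_2n(mu);
  (i) is then immediate. Both facts are proved along the modification rule. When mu has at most
  n rows all entries of a are positive, and deleting the last box of mu swaps two consecutive
  values v < v + 1 standing in increasing order, which removes exactly one inversion. Deleting a
  border strip of 2m boxes spanning c columns turns the entry -m of a into m and moves it to the
  left past c - 1 entries of absolute value below m; counting the values below m shows that the
  length drops by 2m - c, the number of boxes minus the number of columns.\<close>

lemma list_update_two_decomp:
  assumes "i < j" "j < length xs"
  obtains A B C where "xs = A @ [xs ! i] @ B @ [xs ! j] @ C"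
    and "xs[i := a, j := b] = A @ [a] @ B @ [b] @ C"
proof
  have decomp: "ys = take i ys @ [ys ! i] @ take (j - Suc i) (drop (Suc i) ys) @ [ys ! j] @ drop (Suc j) ys"
    if "length ys = length xs" for ys :: "'a list"
  proof -
    have "drop i ys = ys ! i # drop (Suc i) ys" "drop j ys = ys ! j # drop (Suc j) ys"
      using assms that by (simp_all add: Cons_nth_drop_Suc)
    moreover have "drop (j - Suc i) (drop (Suc i) ys) = drop j ys" using assms by simp
    ultimately show ?thesis
      by (metis append_Cons append_self_conv2 append_take_drop_id)
  qed
  let ?B = "take (j - Suc i) (drop (Suc i) xs)"
  show "xs = take i xs @ [xs ! i] @ ?B @ [xs ! j] @ drop (Suc j) xs"
    by (rule decomp) simp
  have "take (j - Suc i) (drop (Suc i) (xs[i := a, j := b])) = ?B"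
    by (rule nth_equalityI) (use assms in \<open>auto simp: nth_list_update\<close>)
  then show "xs[i := a, j := b] = take i xs @ [a] @ ?B @ [b] @ drop (Suc j) xs"
    using decomp[of "xs[i := a, j := b]"] assms by (simp add: nth_list_update)
qed

fun count_pairs :: "('a \<Rightarrow> 'a \<Rightarrow> bool) \<Rightarrow> 'a list \<Rightarrow> nat" where
  "count_pairs R [] = 0"
| "count_pairs R (x # xs) = length (filter (R x) xs) + count_pairs R xs"

lemma card_index_pairs_eq_count_pairs:
  "card {(i, j). i < j \<and> j < length xs \<and> R (xs ! i) (xs ! j)} = count_pairs R xs"
proof (induction xs)
  case Nil
  show ?case by simp
next
  case (Cons x xs)
  let ?S = "{(i, j). i < j \<and> j < length xs \<and> R (xs ! i) (xs ! j)}"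
  let ?T = "{j. j < length xs \<and> R x (xs ! j)}"
  let ?shift = "\<lambda>(i, j). (Suc i, Suc j)"
  have split: "{(i, j). i < j \<and> j < length (x # xs) \<and> R ((x # xs) ! i) ((x # xs) ! j)}
      = (\<lambda>j. (0, Suc j)) ` ?T \<union> ?shift ` ?S"
  proof (rule set_eqI)
    fix p :: "nat \<times> nat"
    obtain i j where p: "p = (i, j)" by (cases p)
    show "p \<in> {(i, j). i < j \<and> j < length (x # xs) \<and> R ((x # xs) ! i) ((x # xs) ! j)}
        \<longleftrightarrow> p \<in> (\<lambda>j. (0, Suc j)) ` ?T \<union> ?shift ` ?S"
      unfolding p by (cases i; cases j) (auto simp: image_iff)
  qed
  have "finite ?S"
    by (rule finite_subset[of _ "{..<length xs} \<times> {..<length xs}"]) auto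
  moreover have "inj_on (\<lambda>j. (0::nat, Suc j)) ?T" "inj_on ?shift ?S"
    by (auto simp: inj_on_def)
  ultimately have "card ((\<lambda>j. (0, Suc j)) ` ?T \<union> ?shift ` ?S) = card ?T + card ?S"
    by (subst card_Un_disjoint) (auto simp: card_image)
  moreover have "card ?T = length (filter (R x) xs)"
    by (simp add: length_filter_conv_card)
  ultimately show ?case using split Cons.IH by simp
qed

lemma int_length_filter: "int (length (filter P xs)) = (\<Sum>y\<leftarrow>xs. if P y then 1 else 0)"
  by (induction xs) auto

lemma int_count_pairs_append:
  "int (count_pairs R (A @ B)) = int (count_pairs R A) + int (count_pairs R B)
     + (\<Sum>x\<leftarrow>A. \<Sum>y\<leftarrow>B. if R x y then 1 else 0)"
  by (induction A) (auto simp: int_length_filter)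

definition cox_len :: "int list \<Rightarrow> int" where
  "cox_len a = int (inv_stat a + neg_stat a + nsp_stat a)"

definition pair_cost :: "int \<Rightarrow> int \<Rightarrow> int" where
  "pair_cost x y = (if x < y then 1 else 0) + (if x + y < 0 then 1 else 0)"

definition cross_cost :: "int list \<Rightarrow> int list \<Rightarrow> int" where
  "cross_cost A B = (\<Sum>x\<leftarrow>A. \<Sum>y\<leftarrow>B. pair_cost x y)"

lemma inv_stat_eq_count_pairs: "inv_stat a = count_pairs (<) a"
  unfolding inv_stat_def using card_index_pairs_eq_count_pairs[where R = "(<)" and xs = a] by simp

lemma nsp_stat_eq_count_pairs: "nsp_stat a = count_pairs (\<lambda>x y. x + y < 0) a"
  unfolding nsp_stat_def
  using card_index_pairs_eq_count_pairs[where R = "\<lambda>x y. x + y < 0" and xs = a] by simp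

lemma neg_stat_eq_length_filter: "neg_stat a = length (filter (\<lambda>x. x < 0) a)"
  unfolding neg_stat_def by (simp add: length_filter_conv_card)

lemma cox_len_append: "cox_len (A @ B) = cox_len A + cox_len B + cross_cost A B"
proof -
  have "cross_cost A B = (\<Sum>x\<leftarrow>A. \<Sum>y\<leftarrow>B. if x < y then 1 else 0)
      + (\<Sum>x\<leftarrow>A. \<Sum>y\<leftarrow>B. if x + y < 0 then 1 else 0)"
    unfolding cross_cost_def pair_cost_def by (simp add: sum_list_addf)
  then show ?thesis
    unfolding cox_len_def inv_stat_eq_count_pairs nsp_stat_eq_count_pairs neg_stat_eq_length_filter
    using int_count_pairs_append[of "(<)" A B] int_count_pairs_append[of "\<lambda>x y. x + y < 0" A B]
    by simp
qed

lemma cox_len_singleton: "cox_len [x] = (if x < 0 then 1 else 0)"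
  unfolding cox_len_def inv_stat_eq_count_pairs nsp_stat_eq_count_pairs neg_stat_eq_length_filter
  by simp

lemma cross_cost_append_left: "cross_cost (A @ B) C = cross_cost A C + cross_cost B C"
  unfolding cross_cost_def by simp

lemma cross_cost_append_right: "cross_cost A (B @ C) = cross_cost A B + cross_cost A C"
  unfolding cross_cost_def by (simp add: sum_list_addf)

lemma cross_cost_singleton_left: "cross_cost [x] B = (\<Sum>y\<leftarrow>B. pair_cost x y)"
  unfolding cross_cost_def by simp

lemma cross_cost_singleton_right: "cross_cost A [y] = (\<Sum>x\<leftarrow>A. pair_cost x y)"
  unfolding cross_cost_def by simp

lemmas cox_len_expand =
  cox_len_append cross_cost_append_left cross_cost_append_right cox_len_singleton

lemma cox_len_swap_values:
  fixes v :: int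
  assumes "v > 0" and others: "\<forall>z\<in>set (A @ B @ C). z > 0 \<and> z \<noteq> v \<and> z \<noteq> v + 1"
  shows "cox_len (A @ [v] @ B @ [v + 1] @ C) = cox_len (A @ [v + 1] @ B @ [v] @ C) + 1"
proof -
  have "pair_cost v z = pair_cost (v + 1) z" "pair_cost z (v + 1) = pair_cost z v"
    if "z \<in> set B" for z
  proof -
    have "z > 0" "z \<noteq> v" "z \<noteq> v + 1" using that others by auto
    with \<open>v > 0\<close> show "pair_cost v z = pair_cost (v + 1) z" "pair_cost z (v + 1) = pair_cost z v"
      unfolding pair_cost_def by auto
  qed
  then have "cross_cost [v] B = cross_cost [v + 1] B" "cross_cost B [v + 1] = cross_cost B [v]"
    unfolding cross_cost_singleton_left cross_cost_singleton_right
    by (auto intro!: arg_cong[where f = sum_list])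
  moreover have "cross_cost [v] [v + 1] = 1" "cross_cost [v + 1] [v] = 0"
    using \<open>v > 0\<close> by (auto simp: cross_cost_def pair_cost_def)
  ultimately show ?thesis
    using \<open>v > 0\<close> unfolding cox_len_expand by simp
qed

lemma cox_len_move_negated:
  fixes m :: int
  assumes "m > 0"
    and Q: "\<forall>z\<in>set Q. - m < z \<and> z < m"
    and Y: "\<forall>y\<in>set Y. y > 0 \<and> y \<noteq> m"
  shows "cox_len (P @ Q @ [- m] @ Y)
    = cox_len (P @ [m] @ Q @ Y) + 1 + int (length Q) + 2 * int (length (filter (\<lambda>y. y < m) Y))"
proof -
  have "cross_cost P [- m] = cross_cost P [m]"
    unfolding cross_cost_singleton_right
    by (rule arg_cong[where f = sum_list], rule map_cong) (auto simp: pair_cost_def)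
  moreover have "cross_cost Q [- m] = int (length Q)" "cross_cost [m] Q = 0"
    unfolding cross_cost_singleton_right cross_cost_singleton_left
    using Q by (induction Q) (auto simp: pair_cost_def)
  moreover have "cross_cost [- m] Y = cross_cost [m] Y + int (length Y)
      + int (length (filter (\<lambda>y. y < m) Y)) - int (length (filter (\<lambda>y. m < y) Y))"
    unfolding cross_cost_singleton_left int_length_filter
    using Y \<open>m > 0\<close> by (induction Y) (auto simp: pair_cost_def)
  moreover have "int (length Y)
      = int (length (filter (\<lambda>y. y < m) Y)) + int (length (filter (\<lambda>y. m < y) Y))"
    unfolding int_length_filter using Y by (induction Y) auto
  ultimately show ?thesis
    using \<open>m > 0\<close> unfolding cox_len_expand by simp
qed

lemma part_antimono:
  assumes "is_partition mu" "1 \<le> i" "i \<le> j"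
  shows "part mu j \<le> part mu i"
proof (cases "j \<le> length mu")
  case True
  have "sorted_wrt (\<lambda>a b. b \<le> a) mu"
    using assms(1) unfolding is_partition_def by simp
  then have "i - 1 \<le> j - 1 \<Longrightarrow> j - 1 < length mu \<Longrightarrow> mu ! (j - 1) \<le> mu ! (i - 1)"
    by (metis le_neq_implies_less order_refl sorted_wrt_nth_less)
  then show ?thesis using True assms unfolding part_def by auto
qed (simp add: part_def)

lemma part_pos:
  assumes "is_partition mu" "1 \<le> i" "i \<le> length mu"
  shows "1 \<le> part mu i"
proof -
  have "mu ! (i - 1) \<in> set mu" using assms by auto
  then have "mu ! (i - 1) \<noteq> 0" using assms(1) unfolding is_partition_def by metis
  then show ?thesis using assms unfolding part_def by auto
qed

lemma part_eq_0: "length mu < i \<Longrightarrow> part mu i = 0"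
  unfolding part_def by auto

lemma part_nonzero_imp_index: "part mu i \<noteq> 0 \<Longrightarrow> 1 \<le> i \<and> i \<le> length mu"
  unfolding part_def by (auto split: if_splits)

lemma mem_diagram: "(i, j) \<in> diagram mu \<longleftrightarrow> 1 \<le> i \<and> i \<le> length mu \<and> 1 \<le> j \<and> j \<le> part mu i"
  unfolding diagram_def by simp

lemma mem_diagram_iff_le_part: "1 \<le> j \<Longrightarrow> (i, j) \<in> diagram mu \<longleftrightarrow> 1 \<le> i \<and> j \<le> part mu i"
  unfolding diagram_def using part_nonzero_imp_index[of mu i] by auto

lemma le_conj_part_iff:
  assumes "is_partition mu" "1 \<le> s" "1 \<le> i"
  shows "i \<le> conj_part mu s \<longleftrightarrow> s \<le> part mu i"
proof -
  let ?S = "{i. 1 \<le> i \<and> i \<le> length mu \<and> s \<le> part mu i}"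
  have mem: "i \<in> ?S \<longleftrightarrow> s \<le> part mu i" if "1 \<le> i" for i
  proof -
    have "s \<le> part mu i \<Longrightarrow> i \<le> length mu"
      using \<open>1 \<le> s\<close> part_nonzero_imp_index[of mu i] by simp
    then show ?thesis using that by blast
  qed
  have "\<exists>c. ?S = {1..c}"
  proof (cases "?S = {}")
    case True
    then show ?thesis by (intro exI[of _ 0]) simp
  next
    case False
    have fin: "finite ?S" by (rule finite_subset[of _ "{..length mu}"]) auto
    have "?S = {1..Max ?S}"
    proof (intro set_eqI iffI)
      fix x assume "x \<in> {1..Max ?S}"
      moreover have "s \<le> part mu (Max ?S)" using Max_in[OF fin False] by simp
      ultimately have "s \<le> part mu x" "1 \<le> x"
        using part_antimono[OF assms(1), of x "Max ?S"] by auto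
      then show "x \<in> ?S" using mem by blast
    next
      fix x assume "x \<in> ?S"
      then show "x \<in> {1..Max ?S}" using Max_ge[OF fin, of x] by simp
    qed
    then show ?thesis by blast
  qed
  then obtain c where c: "?S = {1..c}" by blast
  have "conj_part mu s = c" unfolding conj_part_def c by simp
  moreover have "i \<in> ?S \<longleftrightarrow> i \<le> c" unfolding c using assms(3) by simp
  ultimately show ?thesis using mem[OF assms(3)] by simp
qed

lemma nat_eq_by_positive_lower_bounds:
  assumes "\<And>i::nat. 1 \<le> i \<Longrightarrow> i \<le> a \<longleftrightarrow> i \<le> b"
  shows "a = b"
  using assms[of a] assms[of b] by (cases "a = 0"; cases "b = 0") auto

lemma conj_part_antimono:
  assumes "is_partition mu" "1 \<le> s" "s \<le> s'"
  shows "conj_part mu s' \<le> conj_part mu s"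
proof (cases "conj_part mu s' = 0")
  case False
  then have "s' \<le> part mu (conj_part mu s')"
    using le_conj_part_iff[OF assms(1), of s' "conj_part mu s'"] assms by simp
  then show ?thesis
    using le_conj_part_iff[OF assms(1,2), of "conj_part mu s'"] False assms(3) by simp
qed simp

lemma conj_part_1:
  assumes "is_partition mu"
  shows "conj_part mu 1 = length mu"
proof (rule nat_eq_by_positive_lower_bounds)
  fix i :: nat
  assume "1 \<le> i"
  then show "i \<le> conj_part mu 1 \<longleftrightarrow> i \<le> length mu"
    using le_conj_part_iff[OF assms, of 1 i] part_pos[OF assms, of i] part_nonzero_imp_index[of mu i]
    by auto
qed

lemma conj_part_le_length: "is_partition mu \<Longrightarrow> 1 \<le> s \<Longrightarrow> conj_part mu s \<le> length mu"
  using conj_part_antimono[of mu 1 s] conj_part_1[of mu] by simp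

lemma diagram_eq_Sigma: "diagram mu = Sigma {1..length mu} (\<lambda>i. {1..part mu i})"
  unfolding diagram_def by auto

lemma finite_diagram: "finite (diagram mu)"
  unfolding diagram_eq_Sigma by simp

lemma card_diagram: "card (diagram mu) = sum_list mu"
proof -
  have "card (diagram mu) = (\<Sum>i\<in>Suc ` {..<length mu}. mu ! (i - 1))"
    unfolding diagram_eq_Sigma by (simp add: card_SigmaI part_def image_Suc_lessThan)
  also have "\<dots> = (\<Sum>i<length mu. mu ! i)"
    by (simp add: sum.reindex)
  finally show ?thesis by (simp add: sum_list_sum_nth atLeast0LessThan)
qed

lemma rho_nth: "t < N \<Longrightarrow> rho N ! t = int (N - t)"
  unfolding rho_def by simp

lemma length_rho [simp]: "length (rho N) = N"
  unfolding rho_def by simp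

lemma int_coxeter_length: "int (coxeter_length N w) = cox_len (w (rho N))"
  unfolding coxeter_length_def cox_len_def Let_def by simp

definition signed_arrangement :: "nat \<Rightarrow> int list \<Rightarrow> bool" where
  "signed_arrangement N a \<longleftrightarrow> distinct (map abs a) \<and> set (map abs a) = {1..int N}"

lemma signed_arrangement_cong:
  assumes "abs ` set a = abs ` set b" "length a = length b"
  shows "signed_arrangement N a \<longleftrightarrow> signed_arrangement N b"
  using assms unfolding signed_arrangement_def by (metis distinct_card card_distinct length_map set_map)

lemma signed_arrangement_rho: "signed_arrangement N (rho N)"
proof -
  have "inj_on (\<lambda>t. int (N - t)) {0..<N}" by (auto simp: inj_on_def)
  moreover have "(\<lambda>t. int (N - t)) ` {0..<N} = {1..int N}"
  proof (intro set_eqI iffI)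
    fix x assume "x \<in> {1..int N}"
    then have "x = int (N - (N - nat x))" "N - nat x \<in> {0..<N}" by auto
    then show "x \<in> (\<lambda>t. int (N - t)) ` {0..<N}" by blast
  qed auto
  ultimately show ?thesis
    unfolding signed_arrangement_def rho_def by (simp add: distinct_map o_def)
qed

lemma cox_len_rho: "cox_len (rho N) = 0"
proof -
  have "{(i, j). i < j \<and> j < length (rho N) \<and> rho N ! i < rho N ! j} = {}"
    "{i. i < length (rho N) \<and> rho N ! i < 0} = {}"
    "{(i, j). i < j \<and> j < length (rho N) \<and> rho N ! i + rho N ! j < 0} = {}"
    by (auto simp: rho_nth)
  then show ?thesis
    unfolding cox_len_def inv_stat_def neg_stat_def nsp_stat_def by (simp only: card.empty)
qed

lemma signed_perms_realize:
  assumes arr: "signed_arrangement N a" and len: "length a = N"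
  shows "\<exists>w \<in> signed_perms N. w (rho N) = a"
proof -
  define \<sigma> where "\<sigma> = (\<lambda>i. N - nat \<bar>a ! i\<bar>)" \<comment> \<open>since rho N ! (N - v) = v\<close>
  define \<epsilon> where "\<epsilon> = (\<lambda>i. if a ! i < 0 then -1 else (1::int))"
  define w where "w = (\<lambda>x::int list. map (\<lambda>i. \<epsilon> i * x ! \<sigma> i) [0..<N])"
  have dist: "distinct (map abs a)" and vals: "set (map abs a) = {1..int N}"
    using arr unfolding signed_arrangement_def by auto
  have range: "1 \<le> \<bar>a ! i\<bar> \<and> nat \<bar>a ! i\<bar> \<le> N" if "i < N" for i
  proof -
    have "\<bar>a ! i\<bar> \<in> set (map abs a)" using that len by auto
    then show ?thesis using vals by auto
  qed
  have "inj_on \<sigma> {..<N}"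
  proof (rule inj_onI)
    fix i j assume i: "i \<in> {..<N}" and j: "j \<in> {..<N}" and "\<sigma> i = \<sigma> j"
    then have "nat \<bar>a ! i\<bar> = nat \<bar>a ! j\<bar>"
      using range[of i] range[of j] unfolding \<sigma>_def by (metis diff_diff_cancel lessThan_iff)
    then have "map abs a ! i = map abs a ! j" using i j len by simp
    then show "i = j" using nth_eq_iff_index_eq[OF dist] i j len by simp
  qed
  moreover have sub: "\<sigma> ` {..<N} \<subseteq> {..<N}" using range unfolding \<sigma>_def by force
  ultimately have "bij_betw \<sigma> {..<N} {..<N}"
    unfolding bij_betw_def using endo_inj_surj[OF _ sub] by simp
  then have "w \<in> signed_perms N"
    unfolding signed_perms_def w_def by (intro CollectI exI[of _ \<sigma>] exI[of _ \<epsilon>]) (simp add: \<epsilon>_def)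
  moreover have "w (rho N) = a"
  proof (rule nth_equalityI)
    fix i assume "i < length (w (rho N))"
    then have i: "i < N" unfolding w_def by simp
    then have "rho N ! \<sigma> i = \<bar>a ! i\<bar>"
      using range[OF i] sub rho_nth[of "\<sigma> i" N] unfolding \<sigma>_def by auto
    then show "w (rho N) ! i = a ! i" unfolding w_def \<epsilon>_def using i by auto
  qed (simp add: w_def len)
  ultimately show ?thesis by blast
qed

text \<open>The vector rho + (-mu'_k, ..., -mu'_1, lam_1, ..., lam_n) prescribed by (iii), where mu'
  is the transpose of mu: column s of mu gives the left entry at index k - s, row r of lam
  the right entry at index k + r - 1 (indices from 0).\<close>
definition left_entry :: "nat \<Rightarrow> nat list \<Rightarrow> nat \<Rightarrow> int" where
  "left_entry n mu s = int n + int s - int (conj_part mu s)"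

definition right_entry :: "nat \<Rightarrow> nat list \<Rightarrow> nat \<Rightarrow> int" where
  "right_entry n lam r = int (part lam r) + int n - int r + 1"

definition target_vector :: "nat \<Rightarrow> nat \<Rightarrow> nat list \<Rightarrow> nat list \<Rightarrow> int list" where
  "target_vector n k mu lam =
     map (\<lambda>t. left_entry n mu (k - t)) [0..<k] @ map (\<lambda>r. right_entry n lam (Suc r)) [0..<n]"

lemma length_target_vector [simp]: "length (target_vector n k mu lam) = k + n"
  unfolding target_vector_def by simp

lemma target_vector_nth_left: "t < k \<Longrightarrow> target_vector n k mu lam ! t = left_entry n mu (k - t)"
  unfolding target_vector_def by (simp add: nth_append)

lemma target_vector_nth_right:
  assumes "k \<le> t" "t < k + n"
  shows "target_vector n k mu lam ! t = right_entry n lam (t - k + 1)"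
proof -
  have "t - k < n" using assms by simp
  then show ?thesis unfolding target_vector_def using assms by (simp add: nth_append)
qed

lemma target_vector_minus_rho:
  "map (\<lambda>t. target_vector n k mu lam ! t - rho (n + k) ! t) [0..<n + k] =
     map (\<lambda>t. - int (conj_part mu (k - t))) [0..<k] @ map (\<lambda>t. int (part lam (t + 1))) [0..<n]"
  (is "?lhs = ?rhs")
proof (rule nth_equalityI)
  fix t assume "t < length ?lhs"
  then have t: "t < n + k" by simp
  show "?lhs ! t = ?rhs ! t"
  proof (cases "t < k")
    case True
    then show ?thesis using t
      by (simp add: nth_append target_vector_nth_left rho_nth left_entry_def)
  next
    case False
    then have "t - k < n" using t by simp
    then show ?thesis using t False
      by (simp add: nth_append target_vector_nth_right rho_nth right_entry_def)
  qed
qed simp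

lemma target_vector_empty: "target_vector n k [] [] = rho (n + k)"
proof (rule nth_equalityI)
  fix t assume "t < length (target_vector n k [] [])"
  moreover have "conj_part [] s = 0" "part [] s = 0" for s
    unfolding conj_part_def part_def by simp_all
  ultimately show "target_vector n k [] [] ! t = rho (n + k) ! t"
    by (cases "t < k") (simp_all add: target_vector_nth_left target_vector_nth_right rho_nth
        left_entry_def right_entry_def)
qed simp

lemma left_entry_strict_mono:
  "is_partition mu \<Longrightarrow> 1 \<le> s \<Longrightarrow> s < s' \<Longrightarrow> left_entry n mu s < left_entry n mu s'"
  using conj_part_antimono[of mu s s'] unfolding left_entry_def by simp

lemma right_entry_strict_antimono:
  "is_partition lam \<Longrightarrow> 1 \<le> r \<Longrightarrow> r < r' \<Longrightarrow> right_entry n lam r' < right_entry n lam r"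
  using part_antimono[of lam r r'] unfolding right_entry_def by simp

lemma target_vector_left_decreasing:
  assumes "is_partition mu" "t + 1 < k"
  shows "target_vector n k mu lam ! (t + 1) < target_vector n k mu lam ! t"
  using assms left_entry_strict_mono[OF assms(1), of "k - (t + 1)" "k - t"]
  by (simp add: target_vector_nth_left)

lemma target_vector_right_decreasing:
  assumes "is_partition lam" "k \<le> t" "t + 1 < k + n"
  shows "target_vector n k mu lam ! (t + 1) < target_vector n k mu lam ! t"
  using assms right_entry_strict_antimono[OF assms(1), of "t - k + 1" "t + 1 - k + 1"]
  by (simp add: target_vector_nth_right)

lemma target_vector_right_pos:
  "k \<le> t \<Longrightarrow> t < k + n \<Longrightarrow> 0 < target_vector n k mu lam ! t"
  by (simp add: target_vector_nth_right right_entry_def)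

definition remove_last_box :: "nat list \<Rightarrow> nat list" where
  "remove_last_box mu = (if last mu = 1 then butlast mu else butlast mu @ [last mu - 1])"

lemma last_eq_part_length: "mu \<noteq> [] \<Longrightarrow> last mu = part mu (length mu)"
  unfolding part_def by (cases mu) (auto simp: last_conv_nth)

lemma part_remove_last_box:
  assumes "mu \<noteq> []"
  shows "part (remove_last_box mu) i = (if i = length mu then part mu i - 1 else part mu i)"
proof -
  have "1 \<le> length mu" using assms by (cases mu) auto
  then show ?thesis using assms unfolding remove_last_box_def part_def
    by (auto simp: nth_append nth_butlast last_conv_nth)
qed

lemma sum_list_remove_last_box:
  assumes "is_partition mu" "mu \<noteq> []"
  shows "sum_list (remove_last_box mu) + 1 = sum_list mu"
proof -
  have "last mu \<noteq> 0" using assms last_in_set unfolding is_partition_def by metis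
  moreover have "sum_list mu = sum_list (butlast mu) + last mu"
    using sum_list_append[of "butlast mu" "[last mu]"] assms(2) by simp
  ultimately show ?thesis unfolding remove_last_box_def by auto
qed

lemma length_remove_last_box_le: "mu \<noteq> [] \<Longrightarrow> length (remove_last_box mu) \<le> length mu"
  unfolding remove_last_box_def by (cases mu) auto

lemma is_partition_remove_last_box:
  assumes "is_partition mu" "mu \<noteq> []"
  shows "is_partition (remove_last_box mu)"
proof -
  have "sorted_wrt (\<lambda>a b. b \<le> a) (butlast mu @ [last mu])" "0 \<notin> set (butlast mu @ [last mu])"
    using assms unfolding is_partition_def by simp_all
  then show ?thesis
    unfolding remove_last_box_def is_partition_def by (auto simp: sorted_wrt_append)
qed

lemma conj_part_last:
  assumes mu: "is_partition mu" and "mu \<noteq> []"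
  shows "conj_part mu (last mu) = length mu"
proof (rule nat_eq_by_positive_lower_bounds)
  fix i :: nat assume i: "1 \<le> i"
  have last: "last mu = part mu (length mu)" by (rule last_eq_part_length[OF \<open>mu \<noteq> []\<close>])
  moreover have "1 \<le> length mu" using \<open>mu \<noteq> []\<close> by (cases mu) auto
  ultimately have "1 \<le> last mu" using part_pos[OF mu] by simp
  then have "i \<le> conj_part mu (last mu) \<longleftrightarrow> last mu \<le> part mu i"
    by (rule le_conj_part_iff[OF mu _ i])
  also have "\<dots> \<longleftrightarrow> i \<le> length mu"
    using \<open>1 \<le> last mu\<close> last part_antimono[OF mu i, of "length mu"] part_nonzero_imp_index[of mu i]
    by auto
  finally show "i \<le> conj_part mu (last mu) \<longleftrightarrow> i \<le> length mu" .
qed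

lemma conj_part_remove_last_box:
  assumes mu: "is_partition mu" and "mu \<noteq> []" "1 \<le> s"
  shows "conj_part (remove_last_box mu) s = (if s = last mu then length mu - 1 else conj_part mu s)"
proof (rule nat_eq_by_positive_lower_bounds)
  fix i :: nat assume i: "1 \<le> i"
  have last: "last mu = part mu (length mu)" by (rule last_eq_part_length[OF \<open>mu \<noteq> []\<close>])
  moreover have L: "1 \<le> length mu" using \<open>mu \<noteq> []\<close> by (cases mu) auto
  ultimately have p: "1 \<le> last mu" using part_pos[OF mu] by simp
  have "i \<le> conj_part (remove_last_box mu) s \<longleftrightarrow> s \<le> part (remove_last_box mu) i"
    by (rule le_conj_part_iff[OF is_partition_remove_last_box[OF mu \<open>mu \<noteq> []\<close>] \<open>1 \<le> s\<close> i])
  moreover have "i \<le> conj_part mu s \<longleftrightarrow> s \<le> part mu i"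
    by (rule le_conj_part_iff[OF mu \<open>1 \<le> s\<close> i])
  moreover have "i \<le> length mu \<longleftrightarrow> last mu \<le> part mu i"
    using conj_part_last[OF mu \<open>mu \<noteq> []\<close>] le_conj_part_iff[OF mu p i] by simp
  ultimately show "i \<le> conj_part (remove_last_box mu) s
      \<longleftrightarrow> i \<le> (if s = last mu then length mu - 1 else conj_part mu s)"
    using part_remove_last_box[OF \<open>mu \<noteq> []\<close>, of i] last L p by (cases "s = last mu") auto
qed

text \<open>The last box of mu, in row L and column p, turns the right entry of row L into
  the value just above the left entry of column p; removing it swaps these two values.\<close>
lemma target_vector_remove_last_box_update:
  assumes mu: "is_partition mu" and "mu \<noteq> []" "length mu \<le> n" "part mu 1 \<le> k"
  defines "xs \<equiv> target_vector n k (remove_last_box mu) (remove_last_box mu)"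
    and "v \<equiv> int n + int (last mu) - int (length mu)"
  shows "k - last mu < k + length mu - 1" and "k + length mu - 1 < length xs"
    and "xs ! (k - last mu) = v + 1" and "xs ! (k + length mu - 1) = v"
    and "target_vector n k mu mu = xs[k - last mu := v, k + length mu - 1 := v + 1]"
proof -
  define L where "L = length mu"
  define p where "p = last mu"
  have L: "1 \<le> L" "L \<le> n"
    unfolding L_def using \<open>mu \<noteq> []\<close> \<open>length mu \<le> n\<close> by (auto simp: Suc_le_eq)
  have p: "p = part mu L" unfolding p_def L_def by (rule last_eq_part_length[OF \<open>mu \<noteq> []\<close>])
  have p1: "1 \<le> p" using part_pos[OF mu] L p unfolding L_def by simp
  have pk: "p \<le> k" using part_antimono[OF mu order_refl \<open>1 \<le> L\<close>] p assms(4) by simp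
  have conj_p: "conj_part mu p = L" unfolding p_def L_def by (rule conj_part_last[OF mu \<open>mu \<noteq> []\<close>])
  note part' = part_remove_last_box[OF \<open>mu \<noteq> []\<close>, folded L_def]
  note conj' = conj_part_remove_last_box[OF mu \<open>mu \<noteq> []\<close>, folded L_def p_def]
  show "k - last mu < k + length mu - 1" "k + length mu - 1 < length xs"
    unfolding xs_def p_def[symmetric] L_def[symmetric] using p1 pk L by auto
  show "xs ! (k - last mu) = v + 1"
    unfolding xs_def v_def p_def[symmetric] L_def[symmetric] using conj'[OF p1] p1 pk L
    by (simp add: target_vector_nth_left left_entry_def)
  show "xs ! (k + length mu - 1) = v"
    unfolding xs_def v_def p_def[symmetric] L_def[symmetric] using L p1 part'[of L] p
    by (simp add: target_vector_nth_right right_entry_def)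
  show "target_vector n k mu mu = xs[k - last mu := v, k + length mu - 1 := v + 1]"
    unfolding p_def[symmetric] L_def[symmetric]
  proof (rule nth_equalityI)
    fix t assume "t < length (target_vector n k mu mu)"
    then have t: "t < k + n" by simp
    show "target_vector n k mu mu ! t = xs[k - p := v, k + L - 1 := v + 1] ! t"
    proof (cases "t < k")
      case True
      then have "1 \<le> k - t" "k - t = p \<longleftrightarrow> t = k - p" using pk by auto
      then show ?thesis using True L conj'[of "k - t"] conj_p
        by (cases "t = k - p") (simp_all add: xs_def target_vector_nth_left left_entry_def v_def
            p_def[symmetric] L_def[symmetric])
    next
      case False
      then have "t - k + 1 = L \<longleftrightarrow> t = k + L - 1" "t \<noteq> k - p" using L p1 pk by auto
      then show ?thesis using False t part'[of "t - k + 1"] p L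
        by (cases "t = k + L - 1") (simp_all add: xs_def target_vector_nth_right right_entry_def
            v_def p_def[symmetric] L_def[symmetric])
    qed
  qed (simp add: xs_def)
qed

lemma target_vector_remove_last_box:
  assumes "is_partition mu" "mu \<noteq> []" "length mu \<le> n" "part mu 1 \<le> k"
  obtains A B C v where
    "target_vector n k (remove_last_box mu) (remove_last_box mu) = A @ [v + 1] @ B @ [v] @ C"
    "target_vector n k mu mu = A @ [v] @ B @ [v + 1] @ C"
proof -
  note update = target_vector_remove_last_box_update[OF assms]
  let ?xs = "target_vector n k (remove_last_box mu) (remove_last_box mu)"
  let ?v = "int n + int (last mu) - int (length mu)"
  obtain A B C where "?xs = A @ [?xs ! (k - last mu)] @ B @ [?xs ! (k + length mu - 1)] @ C"
    and "?xs[k - last mu := ?v, k + length mu - 1 := ?v + 1] = A @ [?v] @ B @ [?v + 1] @ C"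
    by (rule list_update_two_decomp[OF update(1,2)])
  then show thesis using that update(3-5) by simp
qed

lemma target_vector_pos:
  assumes "is_partition mu" "length mu \<le> n"
  shows "\<forall>x\<in>set (target_vector n k mu mu). 0 < x"
proof -
  have "0 < left_entry n mu s" if "1 \<le> s" for s
    using conj_part_le_length[OF assms(1) that] assms(2) that unfolding left_entry_def by simp
  then show ?thesis unfolding target_vector_def by (auto simp: right_entry_def)
qed

lemma target_vector_of_short_partition:
  assumes "is_partition mu" "length mu \<le> n" "part mu 1 \<le> k"
  shows "signed_arrangement (n + k) (target_vector n k mu mu)
    \<and> cox_len (target_vector n k mu mu) = int (sum_list mu)"
  using assms
proof (induction "sum_list mu" arbitrary: mu rule: less_induct)
  case less
  show ?case
  proof (cases "mu = []")
    case True
    then show ?thesis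
      using target_vector_empty signed_arrangement_rho cox_len_rho by (simp add: add.commute)
  next
    case False
    define mu' where "mu' = remove_last_box mu"
    have mu': "is_partition mu'" "length mu' \<le> n" "part mu' 1 \<le> k"
      using is_partition_remove_last_box[OF less.prems(1) False] less.prems(2,3)
        length_remove_last_box_le[OF False] part_remove_last_box[OF False, of 1]
      unfolding mu'_def by auto
    have sum: "sum_list mu' + 1 = sum_list mu"
      unfolding mu'_def using sum_list_remove_last_box less.prems(1) False .
    then have IH: "signed_arrangement (n + k) (target_vector n k mu' mu')
        \<and> cox_len (target_vector n k mu' mu') = int (sum_list mu')"
      using less.hyps mu' by simp
    obtain A B C v where
      before: "target_vector n k mu' mu' = A @ [v + 1] @ B @ [v] @ C" and
      after: "target_vector n k mu mu = A @ [v] @ B @ [v + 1] @ C"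
      by (rule target_vector_remove_last_box[OF less.prems(1) False less.prems(2,3), folded mu'_def])
    have "\<forall>x\<in>set (A @ [v + 1] @ B @ [v] @ C). 0 < x"
      using target_vector_pos[OF mu'(1,2), where k = k] before by simp
    moreover have "distinct (target_vector n k mu' mu')"
      using IH distinct_map unfolding signed_arrangement_def by blast
    then have "distinct (A @ [v + 1] @ B @ [v] @ C)" unfolding before .
    ultimately have "v > 0" "\<forall>z\<in>set (A @ B @ C). z > 0 \<and> z \<noteq> v \<and> z \<noteq> v + 1"
      by auto
    then have "cox_len (target_vector n k mu mu) = cox_len (target_vector n k mu' mu') + 1"
      unfolding before after by (rule cox_len_swap_values)
    moreover have "signed_arrangement (n + k) (target_vector n k mu mu)"
      using IH unfolding before after
      by (subst signed_arrangement_cong[of _ "A @ [v + 1] @ B @ [v] @ C"]) auto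
    ultimately show ?thesis using IH sum by simp
  qed
qed

definition strip_boxes :: "nat list \<Rightarrow> nat \<Rightarrow> nat \<Rightarrow> (nat \<times> nat) set" where
  "strip_boxes mu c e = {(i, s).
     (1 \<le> s \<and> s < c \<and> conj_part mu (Suc s) \<le> i \<and> i \<le> conj_part mu s)
     \<or> (s = c \<and> e \<le> i \<and> i \<le> conj_part mu s)}"

lemma rim_box_0: "rim_box mu 0 = (length mu, 1)"
  unfolding rim_box_def by simp

lemma rim_box_Suc: "rim_box mu (Suc t) = rim_step mu (rim_box mu t)"
  unfolding rim_box_def by simp

text \<open>The walk reaches box (i, j) after exactly length mu - i + j - 1 steps, so it never
  revisits a box.\<close>
lemma rim_walk_invariant:
  assumes mu: "is_partition mu" and "mu \<noteq> []"
    and inside: "\<forall>t<h. rim_box mu t \<in> diagram mu" and "t < h"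
  shows "length mu - fst (rim_box mu t) + snd (rim_box mu t) = Suc t
       \<and> fst (rim_box mu t) \<le> length mu \<and> 1 \<le> snd (rim_box mu t)
       \<and> part mu (Suc (fst (rim_box mu t))) \<le> snd (rim_box mu t)
       \<and> rim_box mu ` {..t} = strip_boxes mu (snd (rim_box mu t)) (fst (rim_box mu t))"
  using \<open>t < h\<close>
proof (induction t)
  case 0
  have "1 \<le> length mu" using \<open>mu \<noteq> []\<close> by (cases mu) auto
  moreover have "strip_boxes mu 1 (length mu) = {(length mu, 1)}"
    unfolding strip_boxes_def using conj_part_1[OF mu] by auto
  ultimately show ?case by (simp add: rim_box_0 part_eq_0)
next
  case (Suc t)
  then have IH: "length mu - i + j = Suc t" "i \<le> length mu" "part mu (Suc i) \<le> j"
      "rim_box mu ` {..t} = strip_boxes mu j i"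
    if "rim_box mu t = (i, j)" for i j
    using that by simp_all
  obtain i j where box: "rim_box mu t = (i, j)" by (cases "rim_box mu t")
  have "(i, j) \<in> diagram mu" using inside Suc.prems box by (metis Suc_lessD)
  then have i1: "1 \<le> i" and j1: "1 \<le> j" and "j \<le> part mu i" by (auto simp: mem_diagram)
  then have i_le: "i \<le> conj_part mu j" using le_conj_part_iff[OF mu j1 i1] by simp
  have next_inside: "rim_box mu (Suc t) \<in> diagram mu" using inside Suc.prems by blast
  have walk: "rim_box mu ` {..Suc t} = insert (rim_box mu (Suc t)) (rim_box mu ` {..t})"
    by (simp add: atMost_Suc)
  show ?case
  proof (cases "j + 1 \<le> part mu i")
    case True
    then have step: "rim_box mu (Suc t) = (i, Suc j)" by (simp add: rim_box_Suc box rim_step_def)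
    have "conj_part mu (Suc j) = i"
      using le_conj_part_iff[OF mu _ i1, of "Suc j"] le_conj_part_iff[OF mu, of "Suc j" "Suc i"]
        True IH(3)[OF box] by (simp add: le_antisym not_less_eq_eq)
    then have "strip_boxes mu (Suc j) i = insert (i, Suc j) (strip_boxes mu j i)"
      unfolding strip_boxes_def using j1 by (auto simp: less_Suc_eq)
    then show ?thesis using IH[OF box] j1 True step walk by simp
  next
    case False
    then have step: "rim_box mu (Suc t) = (i - 1, j)" by (simp add: rim_box_Suc box rim_step_def)
    have i2: "2 \<le> i" using next_inside step by (auto simp: mem_diagram)
    have "strip_boxes mu j (i - 1) = insert (i - 1, j) (strip_boxes mu j i)"
      unfolding strip_boxes_def using i_le i2 by auto
    then show ?thesis using IH[OF box] False step walk i2 j1 by auto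
  qed
qed

lemma rim_strip_eq_strip_boxes:
  assumes mu: "is_partition mu" and "mu \<noteq> []" and "rim_strip_exists mu h" and "0 < h"
  obtains c e where "rim_strip mu h = strip_boxes mu c e" and "card (rim_strip mu h) = h"
    and "1 \<le> c" and "(e, c) \<in> diagram mu" and "length mu - e + c = h" and "e \<le> length mu"
proof -
  have inside: "\<forall>t<h. rim_box mu t \<in> diagram mu"
    using \<open>rim_strip_exists mu h\<close> unfolding rim_strip_exists_def .
  note walk = rim_walk_invariant[OF mu \<open>mu \<noteq> []\<close> inside]
  define T where "T = h - 1"
  have "T < h" "h = Suc T" "{..<h} = {..T}" using \<open>0 < h\<close> unfolding T_def by auto
  define e where "e = fst (rim_box mu T)"
  define c where "c = snd (rim_box mu T)"
  have W: "length mu - e + c = Suc T" "e \<le> length mu" "1 \<le> c"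
    "rim_box mu ` {..T} = strip_boxes mu c e"
    using walk[OF \<open>T < h\<close>] unfolding e_def c_def by auto
  have "(e, c) \<in> diagram mu"
    using inside \<open>T < h\<close> unfolding e_def c_def by simp
  moreover have "inj_on (rim_box mu) {..<h}"
  proof (rule inj_onI)
    fix a b assume "a \<in> {..<h}" "b \<in> {..<h}" and same: "rim_box mu a = rim_box mu b"
    then have "a < h" "b < h" by simp_all
    have "length mu - fst (rim_box mu a) + snd (rim_box mu a) = Suc a"
      by (rule conjunct1[OF walk[OF \<open>a < h\<close>]])
    moreover have "length mu - fst (rim_box mu b) + snd (rim_box mu b) = Suc b"
      by (rule conjunct1[OF walk[OF \<open>b < h\<close>]])
    ultimately show "a = b" unfolding same by linarith
  qed
  then have "card (rim_strip mu h) = h" unfolding rim_strip_def by (simp add: card_image)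
  ultimately show thesis
    using that W \<open>h = Suc T\<close> \<open>{..<h} = {..T}\<close> unfolding rim_strip_def by simp
qed

lemma ncols_strip_boxes:
  assumes mu: "is_partition mu" and "1 \<le> c" and "e \<le> conj_part mu c"
  shows "ncols (strip_boxes mu c e) = c"
proof -
  have "snd ` strip_boxes mu c e = {1..c}"
  proof (intro set_eqI iffI)
    fix s assume s: "s \<in> {1..c}"
    have "conj_part mu (Suc s) \<le> conj_part mu s" using conj_part_antimono[OF mu] s by simp
    then have "(if s < c then conj_part mu s else e, s) \<in> strip_boxes mu c e"
      unfolding strip_boxes_def using s \<open>e \<le> conj_part mu c\<close> by auto
    then show "s \<in> snd ` strip_boxes mu c e" by force
  qed (use \<open>1 \<le> c\<close> in \<open>auto simp: strip_boxes_def\<close>)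
  then show ?thesis unfolding ncols_def by simp
qed

lemma conj_part_diff_strip_boxes:
  assumes mu: "is_partition mu" and nu: "is_partition nu"
    and diff: "diagram nu = diagram mu - strip_boxes mu c e"
    and "1 \<le> c" and "(e, c) \<in> diagram mu"
  shows "\<And>s. 1 \<le> s \<Longrightarrow> s < c \<Longrightarrow> conj_part nu s = conj_part mu (Suc s) - 1"
    and "conj_part nu c = e - 1"
    and "\<And>s. c < s \<Longrightarrow> conj_part nu s = conj_part mu s"
proof -
  have e1: "1 \<le> e" and "c \<le> part mu e" using \<open>(e, c) \<in> diagram mu\<close> by (auto simp: mem_diagram)
  then have e_le: "e \<le> conj_part mu c" using le_conj_part_iff[OF mu \<open>1 \<le> c\<close> e1] by simp
  have mem: "i \<le> conj_part nu s \<longleftrightarrow> i \<le> conj_part mu s \<and> (i, s) \<notin> strip_boxes mu c e"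
    if i: "1 \<le> i" and s: "1 \<le> s" for i s
  proof -
    have "i \<le> conj_part nu s \<longleftrightarrow> (i, s) \<in> diagram nu"
      using le_conj_part_iff[OF nu s i] mem_diagram_iff_le_part[OF s] i by simp
    also have "\<dots> \<longleftrightarrow> (i, s) \<in> diagram mu \<and> (i, s) \<notin> strip_boxes mu c e"
      unfolding diff by simp
    also have "(i, s) \<in> diagram mu \<longleftrightarrow> i \<le> conj_part mu s"
      using le_conj_part_iff[OF mu s i] mem_diagram_iff_le_part[OF s] i by simp
    finally show ?thesis .
  qed
  show "conj_part nu s = conj_part mu (Suc s) - 1" if "1 \<le> s" "s < c" for s
  proof (rule nat_eq_by_positive_lower_bounds)
    fix i :: nat assume "1 \<le> i"
    have "Suc s \<le> part mu 1"
      using that \<open>c \<le> part mu e\<close> part_antimono[OF mu order_refl e1] by simp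
    then have "1 \<le> conj_part mu (Suc s)" using le_conj_part_iff[OF mu, of "Suc s" 1] by simp
    moreover have "conj_part mu (Suc s) \<le> conj_part mu s" using conj_part_antimono[OF mu] that by simp
    ultimately show "i \<le> conj_part nu s \<longleftrightarrow> i \<le> conj_part mu (Suc s) - 1"
      using mem[OF \<open>1 \<le> i\<close> \<open>1 \<le> s\<close>] that unfolding strip_boxes_def by auto
  qed
  show "conj_part nu c = e - 1"
    by (rule nat_eq_by_positive_lower_bounds)
      (use mem[OF _ \<open>1 \<le> c\<close>] e_le e1 in \<open>auto simp: strip_boxes_def\<close>)
  show "conj_part nu s = conj_part mu s" if "c < s" for s
    by (rule nat_eq_by_positive_lower_bounds)
      (use mem that \<open>1 \<le> c\<close> in \<open>auto simp: strip_boxes_def\<close>)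
qed

lemma part_1_le_of_diagram_subset:
  assumes "diagram nu \<subseteq> diagram mu"
  shows "part nu 1 \<le> part mu 1"
proof (cases "part nu 1 = 0")
  case False
  then have "(1, part nu 1) \<in> diagram nu"
    unfolding mem_diagram using part_nonzero_imp_index[of nu 1] by auto
  then have "(1, part nu 1) \<in> diagram mu" using assms by blast
  then show ?thesis by (simp add: mem_diagram)
qed simp

lemma left_entry_remove_rim_strip:
  assumes mu: "is_partition mu" and "n < length mu"
    and h: "h = 2 * (length mu - n - 1)" "rim_strip_exists mu h" "rim_strip mu h \<noteq> {}"
    and nu: "is_partition nu" and diff: "diagram nu = diagram mu - rim_strip mu h"
  obtains c where "1 \<le> c" "c \<le> part mu 1" "ncols (rim_strip mu h) = c"
    "sum_list nu + h = sum_list mu"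
    "\<And>s. 1 \<le> s \<Longrightarrow> s < c \<Longrightarrow> left_entry n nu s = left_entry n mu (Suc s)"
    "left_entry n nu c = int (length mu - n - 1)"
    "\<And>s. c < s \<Longrightarrow> left_entry n nu s = left_entry n mu s"
proof -
  have "0 < h" using \<open>rim_strip mu h \<noteq> {}\<close> unfolding rim_strip_def by auto
  have "mu \<noteq> []" using \<open>n < length mu\<close> by auto
  obtain c e where strip: "rim_strip mu h = strip_boxes mu c e" and card: "card (rim_strip mu h) = h"
    and c: "1 \<le> c" and ec: "(e, c) \<in> diagram mu" and walk: "length mu - e + c = h" "e \<le> length mu"
    by (rule rim_strip_eq_strip_boxes[OF mu \<open>mu \<noteq> []\<close> h(2) \<open>0 < h\<close>])
  have e1: "1 \<le> e" and "c \<le> part mu e" using ec by (auto simp: mem_diagram)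
  then have "c \<le> part mu 1" using part_antimono[OF mu order_refl e1] by simp
  moreover have "ncols (rim_strip mu h) = c"
    unfolding strip using ncols_strip_boxes[OF mu c] le_conj_part_iff[OF mu c e1] \<open>c \<le> part mu e\<close>
    by simp
  moreover have sub: "rim_strip mu h \<subseteq> diagram mu"
    using h(2) unfolding rim_strip_exists_def rim_strip_def by auto
  then have "sum_list nu + h = sum_list mu"
    using card_Diff_subset[OF _ sub] card_mono[OF finite_diagram sub] finite_subset[OF sub]
    unfolding card_diagram[symmetric] diff card by (simp add: finite_diagram)
  moreover note conj_nu = conj_part_diff_strip_boxes[OF mu nu diff[unfolded strip] c ec]
  moreover have "1 \<le> conj_part mu (Suc s)" if "s < c" for s
    using le_conj_part_iff[OF mu, of "Suc s" 1] that \<open>c \<le> part mu 1\<close> by simp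
  ultimately show thesis
    using that c walk e1 h(1) \<open>n < length mu\<close> \<open>0 < h\<close> conj_part_1[OF mu]
    unfolding left_entry_def by (simp add: Suc_le_eq)
qed

lemma length_filter_less_signed_arrangement:
  assumes "signed_arrangement N a" and "m \<in> abs ` set a"
  shows "int (length (filter (\<lambda>x. x < m) (map abs a))) = m - 1"
proof -
  have dist: "distinct (map abs a)" and vals: "set (map abs a) = {1..int N}"
    using assms(1) unfolding signed_arrangement_def by blast+
  have m: "1 \<le> m" "m \<le> int N" using assms(2) vals by auto
  have "length (filter (\<lambda>x. x < m) (map abs a)) = card ({x. x < m} \<inter> set (map abs a))"
    by (rule distinct_length_filter[OF dist])
  also have "{x. x < m} \<inter> set (map abs a) = {1..m - 1}"
    unfolding vals using m by auto
  finally show ?thesis using m by simp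
qed

lemma target_vector_remove_strip_decomp:
  assumes c: "1 \<le> c" "c \<le> k"
    and col_1: "left_entry n mu 1 = - m"
    and shifted: "\<And>s. 1 \<le> s \<Longrightarrow> s < c \<Longrightarrow> left_entry n nu s = left_entry n mu (Suc s)"
    and col_c: "left_entry n nu c = m"
    and beyond: "\<And>s. c < s \<Longrightarrow> left_entry n nu s = left_entry n mu s"
  shows "target_vector n k mu lam = map (\<lambda>t. left_entry n mu (k - t)) [0..<k - c]
      @ map (\<lambda>t. left_entry n mu (k - t)) [k - c..<k - 1] @ [- m]
      @ map (\<lambda>r. right_entry n lam (Suc r)) [0..<n]"
    and "target_vector n k nu lam = map (\<lambda>t. left_entry n mu (k - t)) [0..<k - c] @ [m]
      @ map (\<lambda>t. left_entry n mu (k - t)) [k - c..<k - 1]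
      @ map (\<lambda>r. right_entry n lam (Suc r)) [0..<n]"
proof -
  have "[0..<k] = [0..<k - c] @ [k - c..<k - 1] @ [k - 1]"
    using c upt_add_eq_append[of 0 "k - c" "c - 1"] upt_Suc_append[of 0 "k - 1"] by simp
  then show "target_vector n k mu lam = map (\<lambda>t. left_entry n mu (k - t)) [0..<k - c]
      @ map (\<lambda>t. left_entry n mu (k - t)) [k - c..<k - 1] @ [- m]
      @ map (\<lambda>r. right_entry n lam (Suc r)) [0..<n]"
    using c col_1 unfolding target_vector_def by simp
  have "[0..<k] = [0..<k - c] @ [k - c] @ map Suc [k - c..<k - 1]"
    using c upt_add_eq_append[of 0 "k - c" c] upt_conv_Cons[of "k - c" k] by (simp add: map_Suc_upt)
  moreover have "left_entry n nu (k - Suc t) = left_entry n mu (k - t)" if "k - c \<le> t" "t < k - 1" for t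
    using that shifted[of "k - Suc t"] by (simp add: Suc_diff_Suc)
  ultimately show "target_vector n k nu lam = map (\<lambda>t. left_entry n mu (k - t)) [0..<k - c] @ [m]
      @ map (\<lambda>t. left_entry n mu (k - t)) [k - c..<k - 1]
      @ map (\<lambda>r. right_entry n lam (Suc r)) [0..<n]"
    using c col_c beyond unfolding target_vector_def by simp
qed

lemma left_entry_bounds_remove_strip:
  assumes mu: "is_partition mu" and nu: "is_partition nu" and "1 \<le> c"
    and col_1: "left_entry n mu 1 = - m"
    and shifted: "\<And>s. 1 \<le> s \<Longrightarrow> s < c \<Longrightarrow> left_entry n nu s = left_entry n mu (Suc s)"
    and col_c: "left_entry n nu c = m"
    and beyond: "\<And>s. c < s \<Longrightarrow> left_entry n nu s = left_entry n mu s"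
  shows "\<And>s. 1 < s \<Longrightarrow> s \<le> c \<Longrightarrow> - m < left_entry n mu s \<and> left_entry n mu s < m"
    and "\<And>s. c < s \<Longrightarrow> m < left_entry n mu s"
proof -
  fix s assume "1 < s" "s \<le> c"
  have "- m < left_entry n mu s"
    unfolding col_1[symmetric] by (rule left_entry_strict_mono[OF mu order_refl \<open>1 < s\<close>])
  moreover have "left_entry n mu s = left_entry n nu (s - 1)"
    using shifted[of "s - 1"] \<open>1 < s\<close> \<open>s \<le> c\<close> by simp
  moreover have "1 \<le> s - 1" "s - 1 < c" using \<open>1 < s\<close> \<open>s \<le> c\<close> by auto
  then have "left_entry n nu (s - 1) < m"
    using left_entry_strict_mono[OF nu, of "s - 1" c n] col_c by simp
  ultimately show "- m < left_entry n mu s \<and> left_entry n mu s < m" by simp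
next
  fix s assume "c < s"
  then show "m < left_entry n mu s"
    using left_entry_strict_mono[OF nu \<open>1 \<le> c\<close> \<open>c < s\<close>, of n] beyond col_c by simp
qed

lemma target_vector_remove_strip:
  assumes mu: "is_partition mu" and nu: "is_partition nu"
    and c: "1 \<le> c" "c \<le> k" and "0 < m"
    and col_1: "left_entry n mu 1 = - m"
    and shifted: "\<And>s. 1 \<le> s \<Longrightarrow> s < c \<Longrightarrow> left_entry n nu s = left_entry n mu (Suc s)"
    and col_c: "left_entry n nu c = m"
    and beyond: "\<And>s. c < s \<Longrightarrow> left_entry n nu s = left_entry n mu s"
    and arr: "signed_arrangement (n + k) (target_vector n k nu lam)"
  shows "signed_arrangement (n + k) (target_vector n k mu lam)"
    and "cox_len (target_vector n k mu lam) = cox_len (target_vector n k nu lam) + 2 * m - int c"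
proof -
  define P where "P = map (\<lambda>t. left_entry n mu (k - t)) [0..<k - c]"
  define Q where "Q = map (\<lambda>t. left_entry n mu (k - t)) [k - c..<k - 1]"
  define Y where "Y = map (\<lambda>r. right_entry n lam (Suc r)) [0..<n]"
  have mu_split: "target_vector n k mu lam = P @ Q @ [- m] @ Y"
    unfolding P_def Q_def Y_def
    by (rule target_vector_remove_strip_decomp(1)[OF c col_1 shifted col_c beyond])
  have nu_split: "target_vector n k nu lam = P @ [m] @ Q @ Y"
    unfolding P_def Q_def Y_def
    by (rule target_vector_remove_strip_decomp(2)[OF c col_1 shifted col_c beyond])
  note bounds = left_entry_bounds_remove_strip[OF mu nu c(1) col_1 shifted col_c beyond]
  have Q_bounds: "\<forall>z\<in>set Q. - m < z \<and> z < m"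
    unfolding Q_def using bounds(1) by auto
  have P_bounds: "\<forall>z\<in>set P. m < z"
    unfolding P_def using bounds(2) by auto
  have Y_pos: "\<forall>y\<in>set Y. 0 < y" unfolding Y_def right_entry_def by auto
  have "m \<notin> set Y"
    using arr[unfolded nu_split signed_arrangement_def] Y_pos \<open>0 < m\<close> by force
  have length_Q: "length Q = c - 1" unfolding Q_def using c by simp
  have "int (length (filter (\<lambda>x. x < m) (map abs (P @ [m] @ Q @ Y)))) = m - 1"
    using length_filter_less_signed_arrangement[OF arr[unfolded nu_split], of m] \<open>0 < m\<close> by simp
  moreover have "filter (\<lambda>x. x < m) (map abs P) = []"
    using P_bounds \<open>0 < m\<close> by (auto simp: filter_empty_conv)
  moreover have "filter (\<lambda>x. x < m) (map abs Q) = map abs Q"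
    using Q_bounds by (auto simp: filter_id_conv)
  moreover have "map abs Y = Y" using Y_pos by (induction Y) auto
  ultimately have "int (length (filter (\<lambda>y. y < m) Y)) = m - int c"
    using length_Q \<open>0 < m\<close> c by simp
  then show "cox_len (target_vector n k mu lam) = cox_len (target_vector n k nu lam) + 2 * m - int c"
    unfolding mu_split nu_split
    using cox_len_move_negated[OF \<open>0 < m\<close> Q_bounds, of Y P] Y_pos \<open>m \<notin> set Y\<close> length_Q c
    by auto
  show "signed_arrangement (n + k) (target_vector n k mu lam)"
    using arr unfolding mu_split nu_split
    by (subst signed_arrangement_cong[of _ "P @ [m] @ Q @ Y"]) auto
qed

lemma modif_is_partition: "modif n mu i lam \<Longrightarrow> is_partition mu \<Longrightarrow> is_partition lam"
  by (induction rule: modif.induct) simp_all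

lemma modif_target_vector:
  assumes "modif n mu i lam" and "is_partition mu" and "part mu 1 \<le> k"
  shows "signed_arrangement (n + k) (target_vector n k mu lam)
    \<and> cox_len (target_vector n k mu lam) = int (sum_list mu) - int i"
  using assms
proof (induction rule: modif.induct)
  case (base mu)
  then show ?case using target_vector_of_short_partition by simp
next
  case (step mu h nu i lam)
  obtain c where c: "1 \<le> c" "c \<le> part mu 1" and cols: "ncols (rim_strip mu h) = c"
    and sizes: "sum_list nu + h = sum_list mu"
    and shifted: "\<And>s. 1 \<le> s \<Longrightarrow> s < c \<Longrightarrow> left_entry n nu s = left_entry n mu (Suc s)"
    and col_c: "left_entry n nu c = int (length mu - n - 1)"
    and beyond: "\<And>s. c < s \<Longrightarrow> left_entry n nu s = left_entry n mu s"
    using left_entry_remove_rim_strip[OF step.prems(1) step.hyps(1-6)] by blast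
  have "part nu 1 \<le> k"
    using part_1_le_of_diagram_subset[of nu mu] step.hyps(6) step.prems(2) by auto
  then have IH: "signed_arrangement (n + k) (target_vector n k nu lam)
      \<and> cox_len (target_vector n k nu lam) = int (sum_list nu) - int i"
    using step.IH step.hyps(5) by blast
  have "0 < h" using step.hyps(4) unfolding rim_strip_def by auto
  have "left_entry n mu 1 = - int (length mu - n - 1)"
    using conj_part_1[OF step.prems(1)] step.hyps(1,2) \<open>0 < h\<close> unfolding left_entry_def by simp
  note remove = target_vector_remove_strip[OF step.prems(1) step.hyps(5) c(1) _ _ this shifted col_c
      beyond IH[THEN conjunct1]]
  show ?case
    using remove c step.prems(2) IH sizes cols step.hyps(2) \<open>0 < h\<close> by simp
qed

theorem lemma2p3:
  fixes n k :: nat and mu lam :: "nat list" and i :: nat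
  assumes "is_partition mu"
    and "part mu 1 \<le> k"
    and "modif n mu i lam"
  shows "\<exists>w \<in> signed_perms (n + k).
           (let a = w (rho (n + k)) in
              (\<forall>t. t + 1 < k \<longrightarrow> a ! t > a ! (t + 1)) \<and>
              (\<forall>t. k \<le> t \<and> t + 1 < k + n \<longrightarrow> a ! t > a ! (t + 1)) \<and>
              (\<forall>t. k \<le> t \<and> t < k + n \<longrightarrow> a ! t > 0) \<and>
              int (coxeter_length (n + k) w) = int (sum_list mu) - int i \<and>
              map (\<lambda>t. a ! t - rho (n + k) ! t) [0..<n + k] =
                map (\<lambda>t. - int (conj_part mu (k - t))) [0..<k] @
                map (\<lambda>t. int (part lam (t + 1))) [0..<n])"
proof -
  let ?a = "target_vector n k mu lam"
  have arr: "signed_arrangement (n + k) ?a" and len: "cox_len ?a = int (sum_list mu) - int i"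
    using modif_target_vector[OF assms(3,1,2)] by simp_all
  obtain w where "w \<in> signed_perms (n + k)" and w: "w (rho (n + k)) = ?a"
    using signed_perms_realize[OF arr] by auto
  have lam: "is_partition lam" by (rule modif_is_partition[OF assms(3,1)])
  show ?thesis
  proof (rule bexI[OF _ \<open>w \<in> signed_perms (n + k)\<close>], unfold Let_def w int_coxeter_length len,
      intro conjI allI impI)
    show "?a ! (t + 1) < ?a ! t" if "t + 1 < k" for t
      using target_vector_left_decreasing[OF assms(1) that] .
    show "?a ! (t + 1) < ?a ! t" if "k \<le> t \<and> t + 1 < k + n" for t
      using target_vector_right_decreasing[OF lam] that by blast
    show "0 < ?a ! t" if "k \<le> t \<and> t < k + n" for t
      using target_vector_right_pos that by blast
  qed (simp_all add: target_vector_minus_rho)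
qed

end
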